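(* Let $G$ be a graph. (1) If $n\geq 3$, then no two distinct vertices of $\uparrow^{n}G$ are strongly cospectral (with respect to the Laplacian). (2) Let $n=2$ and let $u$ be a vertex of $G$ with degree $d_u$. Then the vertices $(0,u)$ and $(1,u)$ are strongly cospectral in $\uparrow^{2}G$ if and only if $d_u\notin\sigma_u(G)$, in which case $$\sigma_{(0,u),(1,u)}^+(\uparrow^{2}G)=2\cdot \sigma_{u}(G)\quad \text{and}\quad \sigma_{(0,u),(1,u)}^-(\uparrow^{2}G)=\{2d_u\}.$$ Moreover, in $\uparrow^{2}G$ the vertex $(0,u)$ can be strongly cospectral only with $(1,u)$.
   Context: All graphs are simple, undirected and unweighted; $L=D-A$ is the Laplacian matrix of a graph, $d_u$ the degree of $u$. For a graph $X$, $\sigma(X)$ is the set of distinct Laplacian eigenvalues, $L(X)=\sum_{\lambda\in\sigma(X)}\lambda E_\lambda$ the spectral decomposition with orthogonal eigenprojections $E_\lambda$, and $\sigma_u(X)=\{\lambda\in\sigma(X):E_\lambda\mathbf{e}_u\neq\mathbf{0}\}$ is the eigenvalue support of vertex $u$. Two vertices $u,v$ of $X$ are strongly cospectral if $E_\lambda\mathbf{e}_u=\pm E_\lambda\mathbf{e}_v$ for every $\lambda\in\sigma_u(X)$; in that case $\sigma^+_{u,v}(X)=\{\lambda:E_\lambda\mathbf{e}_u=E_\lambda\mathbf{e}_v\neq\mathbf{0}\}$ and $\sigma^-_{u,v}(X)=\{\lambda:E_\lambda\mathbf{e}_u=-E_\lambda\mathbf{e}_v\neq\mathbf{0}\}$.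 For a set $S$, $2\cdot S=\{2s:s\in S\}$. The blow-up $\uparrow^{n}G$ has vertex set $\mathbb{Z}_n\times V(G)$, with $(l,u)\sim(m,v)$ iff $u\sim v$ in $G$. *)

theory Defs
  imports "HOL-Analysis.Analysis"
begin

definition simple_graph :: "('a \<Rightarrow> 'a \<Rightarrow> bool) \<Rightarrow> bool" where
  "simple_graph adj \<longleftrightarrow> (\<forall>u v. adj u v = adj v u) \<and> (\<forall>u. \<not> adj u u)"

definition degree :: "('a::finite \<Rightarrow> 'a \<Rightarrow> bool) \<Rightarrow> 'a \<Rightarrow> nat" where
  "degree adj u = card {v. adj u v}"

definition laplacian :: "('a::finite \<Rightarrow> 'a \<Rightarrow> bool) \<Rightarrow> real^'a^'a" where
  "laplacian adj = (\<chi> i j. (if i = j then real (degree adj i) else 0)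
                           - (if adj i j then 1 else 0))"

definition blowup :: "('a \<Rightarrow> 'a \<Rightarrow> bool) \<Rightarrow> ('n \<times> 'a) \<Rightarrow> ('n \<times> 'a) \<Rightarrow> bool" where
  "blowup adj x y = adj (snd x) (snd y)"

definition mat_eigenvalues :: "real^'n^'n \<Rightarrow> real set" where
  "mat_eigenvalues M = {lam. \<exists>v. v \<noteq> 0 \<and> M *v v = lam *\<^sub>R v}"

definition eigenspace :: "real^'n^'n \<Rightarrow> real \<Rightarrow> (real^'n) set" where
  "eigenspace M lam = {v. M *v v = lam *\<^sub>R v}"

definition eproj :: "real^'n^'n \<Rightarrow> real \<Rightarrow> real^'n \<Rightarrow> real^'n" where
  "eproj M lam x = (THE p. p \<in> eigenspace M lam \<and> (\<forall>w\<in>eigenspace M lam. (x - p) \<bullet> w = 0))"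

definition evec :: "'n::finite \<Rightarrow> real^'n" where
  "evec u = axis u 1"

definition eig_support :: "real^'n^'n \<Rightarrow> 'n::finite \<Rightarrow> real set" where
  "eig_support M u = {lam \<in> mat_eigenvalues M. eproj M lam (evec u) \<noteq> 0}"

definition strongly_cospectral :: "real^'n^'n \<Rightarrow> 'n::finite \<Rightarrow> 'n \<Rightarrow> bool" where
  "strongly_cospectral M u v \<longleftrightarrow>
     (\<forall>lam\<in>eig_support M u. eproj M lam (evec u) = eproj M lam (evec v)
                          \<or> eproj M lam (evec u) = - eproj M lam (evec v))"

definition sigma_plus :: "real^'n^'n \<Rightarrow> 'n::finite \<Rightarrow> 'n \<Rightarrow> real set" where
  "sigma_plus M u v = {lam \<in> mat_eigenvalues M.
      eproj M lam (evec u) = eproj M lam (evec v) \<and> eproj M lam (evec u) \<noteq> 0}"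

definition sigma_minus :: "real^'n^'n \<Rightarrow> 'n::finite \<Rightarrow> 'n \<Rightarrow> real set" where
  "sigma_minus M u v = {lam \<in> mat_eigenvalues M.
      eproj M lam (evec u) = - eproj M lam (evec v) \<and> eproj M lam (evec u) \<noteq> 0}"

end

theory Submission
  imports Defs
begin

(*
  Let N be the number of copies. The Laplacian of the blow-up acts on vectors that are constant
  on the fibres Z_N \<times> {v} as N times the Laplacian of G, and on vectors supported on the fibre
  of u with zero sum as multiplication by N d_u; conversely, fibre sums of eigenvectors of the
  blow-up are eigenvectors of G. This gives E_lam e_(l,u) explicitly: the pull-back of
  E_(lam/N) e_u / N, plus e_(l,u) - 1_(fibre of u) / N when lam = N d_u. At lam = N d_u the second
  summand separates (l,u) from every other vertex of its fibre, which leaves no partner for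
  (l,u) when N \<ge> 3 and only (1-l,u) when N = 2; in the latter case the two projections
  coincide away from 2 d_u and sum to the pull-back of E_(lam/2) e_u.
*)

section \<open>Eigenprojections\<close>

lemma eigenspace_subspace: "subspace (eigenspace M lam)"
  unfolding subspace_def eigenspace_def
  by (auto simp: matrix_vector_right_distrib matrix_vector_mult_scaleR algebra_simps)

lemma eproj_eqI:
  assumes "p \<in> eigenspace M lam" and "\<And>w. w \<in> eigenspace M lam \<Longrightarrow> (x - p) \<bullet> w = 0"
  shows "eproj M lam x = p"
  unfolding eproj_def
proof (rule the_equality)
  fix q assume q: "q \<in> eigenspace M lam \<and> (\<forall>w\<in>eigenspace M lam. (x - q) \<bullet> w = 0)"
  have "q - p \<in> eigenspace M lam"
    using q assms(1) eigenspace_subspace subspace_diff by blast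
  then have "(x - q) \<bullet> (q - p) = 0" and "(x - p) \<bullet> (q - p) = 0"
    using q assms(2) by auto
  then have "(q - p) \<bullet> (q - p) = 0" by (simp add: inner_diff_left)
  then show "q = p" by simp
qed (use assms in auto)

lemma
  shows eproj_in_eigenspace: "eproj M lam x \<in> eigenspace M lam"
    and eproj_orthogonal: "w \<in> eigenspace M lam \<Longrightarrow> (x - eproj M lam x) \<bullet> w = 0"
proof -
  have span: "span (eigenspace M lam) = eigenspace M lam"
    using eigenspace_subspace span_eq_iff by blast
  obtain y z where y: "y \<in> eigenspace M lam" and x: "x = y + z"
    and z: "\<And>w. w \<in> eigenspace M lam \<Longrightarrow> orthogonal z w"
    using orthogonal_subspace_decomp_exists[of "eigenspace M lam" x] unfolding span by blast
  have "eproj M lam x = y"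
    using y z x by (intro eproj_eqI) (auto simp: orthogonal_def)
  then show "eproj M lam x \<in> eigenspace M lam"
    and "w \<in> eigenspace M lam \<Longrightarrow> (x - eproj M lam x) \<bullet> w = 0"
    using y z x by (auto simp: orthogonal_def)
qed

lemma eigenvalue_if_eproj_nonzero: "eproj M lam x \<noteq> 0 \<Longrightarrow> lam \<in> mat_eigenvalues M"
  using eproj_in_eigenspace[of M lam x] unfolding mat_eigenvalues_def eigenspace_def by blast

lemma eig_support_eq: "eig_support M u = {lam. eproj M lam (evec u) \<noteq> 0}"
  unfolding eig_support_def using eigenvalue_if_eproj_nonzero by blast

lemma sigma_plus_eq:
  "sigma_plus M u v = {lam. eproj M lam (evec u) = eproj M lam (evec v) \<and> eproj M lam (evec u) \<noteq> 0}"
  unfolding sigma_plus_def using eigenvalue_if_eproj_nonzero by blast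

lemma sigma_minus_eq:
  "sigma_minus M u v = {lam. eproj M lam (evec u) = - eproj M lam (evec v) \<and> eproj M lam (evec u) \<noteq> 0}"
  unfolding sigma_minus_def using eigenvalue_if_eproj_nonzero by blast

lemma inner_evec: "evec u \<bullet> x = x $ u"
  by (simp add: evec_def inner_axis')

lemma evec_nth: "evec u $ v = (if v = u then 1 else 0)"
  by (simp add: evec_def axis_def)

section \<open>Fibres of the blow-up\<close>

definition fibre_const :: "real^'a \<Rightarrow> real^('n::finite \<times> 'a::finite)" where
  "fibre_const x = (\<chi> i. x $ snd i)"

definition fibre_sum :: "real^('n::finite \<times> 'a::finite) \<Rightarrow> real^'a" where
  "fibre_sum w = (\<chi> v. \<Sum>k\<in>UNIV. w $ (k, v))"

lemma fibre_const_nth [simp]: "fibre_const x $ (k, v) = x $ v"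
  by (simp add: fibre_const_def)

lemma fibre_sum_nth [simp]: "fibre_sum w $ v = (\<Sum>k\<in>UNIV. w $ (k, v))"
  by (simp add: fibre_sum_def)

lemma fibre_sum_fibre_const:
  "fibre_sum (fibre_const x :: real^('n::finite \<times> 'a::finite)) = real CARD('n) *\<^sub>R x"
  by (simp add: vec_eq_iff)

lemma inner_fibre_const: "fibre_const x \<bullet> w = x \<bullet> fibre_sum w"
proof -
  have "fibre_const x \<bullet> w = (\<Sum>k\<in>UNIV. \<Sum>v\<in>UNIV. x $ v * w $ (k, v))"
    by (simp add: inner_vec_def sum.cartesian_product fibre_const_def case_prod_beta)
  also have "\<dots> = x \<bullet> fibre_sum w"
    by (subst sum.swap) (simp add: inner_vec_def sum_distrib_left)
  finally show ?thesis .
qed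

lemma fibre_const_eq_0_iff: "fibre_const x = 0 \<longleftrightarrow> x = 0"
  by (simp add: vec_eq_iff)

lemma fibre_const_evec_2: "fibre_const (evec u) = evec (0::2, u) + evec (1, u)"
  by (simp add: vec_eq_iff evec_nth) (metis exhaust_2 zero_neq_one)

section \<open>The Laplacian of the blow-up\<close>

lemma laplacian_mult_nth:
  "(laplacian adj *v x) $ v = real (degree adj v) * x $ v - (\<Sum>w | adj v w. x $ w)"
  by (simp add: laplacian_def matrix_vector_mult_def left_diff_distrib sum_subtractf
      if_distrib[of "\<lambda>c. c * _"] sum.delta sum.If_cases cong: if_cong)

lemma degree_blowup:
  "degree (blowup adj :: 'n::finite \<times> 'a::finite \<Rightarrow> _) (k, v) = CARD('n) * degree adj v"
proof -
  have "{y :: 'n \<times> 'a. blowup adj (k, v) y} = UNIV \<times> {w. adj v w}"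
    by (auto simp: blowup_def)
  then show ?thesis by (simp add: degree_def card_cartesian_product)
qed

lemma laplacian_blowup_mult_nth:
  fixes w :: "real^('n::finite \<times> 'a::finite)"
  shows "(laplacian (blowup adj) *v w) $ (k, v)
    = real CARD('n) * real (degree adj v) * w $ (k, v) - (\<Sum>v' | adj v v'. fibre_sum w $ v')"
proof -
  have "{y :: 'n \<times> 'a. blowup adj (k, v) y} = UNIV \<times> {v'. adj v v'}"
    by (auto simp: blowup_def)
  then have "(\<Sum>y | blowup adj (k, v) y. w $ y) = (\<Sum>v' | adj v v'. fibre_sum w $ v')"
    by (simp add: sum.cartesian_product') (rule sum.swap)
  then show ?thesis
    by (simp add: laplacian_mult_nth degree_blowup)
qed

lemma laplacian_blowup_fibre_const:
  "laplacian (blowup adj) *v (fibre_const x :: real^('n::finite \<times> 'a::finite))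
    = real CARD('n) *\<^sub>R fibre_const (laplacian adj *v x)"
  unfolding vec_eq_iff split_paired_All laplacian_blowup_mult_nth
  by (simp add: laplacian_mult_nth sum_distrib_left right_diff_distrib fibre_sum_fibre_const)

lemma fibre_sum_laplacian_blowup:
  "fibre_sum (laplacian (blowup adj) *v w) = real CARD('n) *\<^sub>R (laplacian adj *v fibre_sum w)"
  for w :: "real^('n::finite \<times> 'a::finite)"
  unfolding vec_eq_iff fibre_sum_nth laplacian_blowup_mult_nth
  by (simp add: laplacian_mult_nth sum_subtractf sum_distrib_left right_diff_distrib mult.assoc)

section \<open>Eigenspaces of the blow-up\<close>

lemma fibre_const_in_eigenspace_blowup:
  assumes "x \<in> eigenspace (laplacian adj) mu"
  shows "(fibre_const x :: real^('n::finite \<times> 'a::finite))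
    \<in> eigenspace (laplacian (blowup adj)) (real CARD('n) * mu)"
  using assms by (simp add: eigenspace_def laplacian_blowup_fibre_const vec_eq_iff)

lemma fibre_sum_in_eigenspace:
  assumes "w \<in> eigenspace (laplacian (blowup adj)) lam"
  shows "fibre_sum (w :: real^('n::finite \<times> 'a::finite))
    \<in> eigenspace (laplacian adj) (lam / real CARD('n))"
proof -
  have "real CARD('n) *\<^sub>R (laplacian adj *v fibre_sum w) = lam *\<^sub>R fibre_sum w"
    using assms by (simp add: eigenspace_def flip: fibre_sum_laplacian_blowup)
      (simp add: vec_eq_iff sum_distrib_left)
  then show ?thesis
    by (simp add: eigenspace_def vec_eq_iff field_simps)
qed

lemma fibre_zero_sum_in_eigenspace_blowup:
  "evec (l, u) - (1 / real CARD('n)) *\<^sub>R fibre_const (evec u)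
    \<in> eigenspace (laplacian (blowup adj :: 'n::finite \<times> 'a::finite \<Rightarrow> _))
         (real CARD('n) * real (degree adj u))"
  (is "?t \<in> _")
proof -
  have "fibre_sum ?t = 0"
    by (simp add: vec_eq_iff evec_nth sum_subtractf)
  then show ?thesis
    by (auto simp: eigenspace_def vec_eq_iff laplacian_blowup_mult_nth evec_nth)
qed

lemma eigenvector_blowup_fibre_constant:
  assumes "w \<in> eigenspace (laplacian (blowup adj)) lam"
    and "lam \<noteq> real CARD('n) * real (degree adj u)"
  shows "w $ (k :: 'n::finite, u) = w $ (l, u)"
proof -
  have "(real CARD('n) * real (degree adj u) - lam) * w $ (i, u)
      = (\<Sum>v' | adj u v'. fibre_sum w $ v')" for i
    using assms(1) by (simp add: eigenspace_def vec_eq_iff laplacian_blowup_mult_nth algebra_simps)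
  then have "(real CARD('n) * real (degree adj u) - lam) * (w $ (k, u) - w $ (l, u)) = 0"
    by (simp add: right_diff_distrib)
  then show ?thesis using assms(2) by simp
qed

lemma fibre_sum_eigenvector_blowup:
  assumes "w \<in> eigenspace (laplacian (blowup adj)) lam"
    and "lam \<noteq> real CARD('n) * real (degree adj u)"
  shows "fibre_sum w $ u = real CARD('n) * w $ (l :: 'n::finite, u)"
proof -
  have "fibre_sum w $ u = (\<Sum>k\<in>(UNIV :: 'n set). w $ (l, u))"
    unfolding fibre_sum_nth
    by (intro sum.cong refl) (rule eigenvector_blowup_fibre_constant[OF assms])
  then show ?thesis by simp
qed

lemma eproj_blowup:
  fixes adj :: "'a::finite \<Rightarrow> 'a \<Rightarrow> bool" and l :: "'n::finite"
  shows "eproj (laplacian (blowup adj)) lam (evec (l, u)) =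
    (1 / real CARD('n)) *\<^sub>R fibre_const (eproj (laplacian adj) (lam / real CARD('n)) (evec u))
    + (if lam = real CARD('n) * real (degree adj u)
       then evec (l, u) - (1 / real CARD('n)) *\<^sub>R fibre_const (evec u) else 0)"
proof -
  define N where "N = real CARD('n)"
  define a where "a = eproj (laplacian adj) (lam / N) (evec u)"
  have N: "N > 0" by (simp add: N_def)
  have "eproj (laplacian (blowup adj)) lam (evec (l, u)) = (1 / N) *\<^sub>R fibre_const a
    + (if lam = N * real (degree adj u) then evec (l, u) - (1 / N) *\<^sub>R fibre_const (evec u) else 0)"
    (is "_ = ?p")
  proof (rule eproj_eqI)
    show "?p \<in> eigenspace (laplacian (blowup adj)) lam"
    proof (intro subspace_add[OF eigenspace_subspace] subspace_mul[OF eigenspace_subspace])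
      have "(fibre_const a :: real^('n \<times> 'a)) \<in> eigenspace (laplacian (blowup adj)) (N * (lam / N))"
        unfolding a_def N_def by (rule fibre_const_in_eigenspace_blowup[OF eproj_in_eigenspace])
      then show "(fibre_const a :: real^('n \<times> 'a)) \<in> eigenspace (laplacian (blowup adj)) lam"
        using N by simp
      show "(if lam = N * real (degree adj u) then evec (l, u) - (1 / N) *\<^sub>R fibre_const (evec u)
          else 0) \<in> eigenspace (laplacian (blowup adj)) lam"
        using fibre_zero_sum_in_eigenspace_blowup[of l u adj] by (simp add: N_def eigenspace_def)
    qed
    fix w :: "real^('n \<times> 'a)"
    assume w: "w \<in> eigenspace (laplacian (blowup adj)) lam"
    have orth: "(evec u - a) \<bullet> fibre_sum w = 0"
      unfolding a_def N_def using fibre_sum_in_eigenspace[OF w] by (rule eproj_orthogonal)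
    show "(evec (l, u) - ?p) \<bullet> w = 0"
    proof (cases "lam = N * real (degree adj u)")
      case True
      then have "evec (l, u) - ?p = (1 / N) *\<^sub>R fibre_const (evec u - a)"
        by (simp add: vec_eq_iff diff_divide_distrib)
      then show ?thesis
        using orth by (simp add: inner_fibre_const)
    next
      case False
      then have "fibre_sum w $ u = N * w $ (l, u)"
        unfolding N_def by (rule fibre_sum_eigenvector_blowup[OF w])
      with False orth N show ?thesis
        by (simp add: inner_diff_left inner_fibre_const inner_evec)
    qed
  qed
  then show ?thesis by (simp add: N_def a_def)
qed

lemma eproj_blowup_fibre_diff:
  fixes m :: "'n::finite"
  shows "eproj (laplacian (blowup adj)) lam (evec (m, v)) $ (k, w)
      - eproj (laplacian (blowup adj)) lam (evec (m, v)) $ (k', w)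
    = (if lam = real CARD('n) * real (degree adj v) \<and> w = v then evec m $ k - evec m $ k' else 0)"
  by (simp add: eproj_blowup evec_nth)

lemma eproj_blowup_eq_iff:
  fixes l m :: "'n::finite"
  shows "eproj (laplacian (blowup adj)) lam (evec (l, u)) = eproj (laplacian (blowup adj)) lam (evec (m, u))
    \<longleftrightarrow> l = m \<or> lam \<noteq> real CARD('n) * real (degree adj u)"
proof -
  have "eproj (laplacian (blowup adj)) lam (evec (l, u)) - eproj (laplacian (blowup adj)) lam (evec (m, u))
      = (if lam = real CARD('n) * real (degree adj u) then evec (l, u) - evec (m, u) else 0)"
    by (simp add: eproj_blowup)
  moreover have "evec (l, u) = evec (m, u) \<longleftrightarrow> l = m"
    by (simp add: evec_def axis_eq_axis)
  ultimately show ?thesis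
    by (auto simp: eq_iff_diff_eq_0[symmetric])
qed

lemma exists_other_if_card_ge_2:
  fixes l :: "'n::finite"
  assumes "CARD('n) \<ge> 2"
  obtains k where "k \<noteq> l"
proof -
  have "UNIV \<noteq> {l}"
  proof
    assume "UNIV = {l}"
    then have "CARD('n) = card {l}" by (simp only:)
    with assms show False by simp
  qed
  then show ?thesis using that by blast
qed

lemma eproj_blowup_eq_0_iff:
  fixes l :: "'n::finite"
  assumes "CARD('n) \<ge> 2"
  shows "eproj (laplacian (blowup adj)) lam (evec (l, u)) = 0
    \<longleftrightarrow> lam \<noteq> real CARD('n) * real (degree adj u)
      \<and> eproj (laplacian adj) (lam / real CARD('n)) (evec u) = 0"
proof
  assume p: "eproj (laplacian (blowup adj)) lam (evec (l, u)) = 0"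
  obtain k where "k \<noteq> l" using exists_other_if_card_ge_2[OF assms] .
  then have "lam \<noteq> real CARD('n) * real (degree adj u)"
    using p eproj_blowup_fibre_diff[of adj lam l u l u k] by (auto simp: evec_nth)
  with p show "lam \<noteq> real CARD('n) * real (degree adj u)
      \<and> eproj (laplacian adj) (lam / real CARD('n)) (evec u) = 0"
    by (simp add: eproj_blowup fibre_const_eq_0_iff)
qed (simp add: eproj_blowup fibre_const_eq_0_iff)

section \<open>Strong cospectrality in the blow-up\<close>

lemma strongly_cospectral_blowup_imp:
  fixes adj :: "'a::finite \<Rightarrow> 'a \<Rightarrow> bool" and l m :: "'n::finite"
  assumes card: "CARD('n) \<ge> 2"
    and sc: "strongly_cospectral (laplacian (blowup adj)) (l, u) (m, v)"
  shows "v = u" and "l \<noteq> m \<Longrightarrow> UNIV = {l, m}"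
proof -
  define lam where "lam = real CARD('n) * real (degree adj u)"
  define p where "p (y :: 'n \<times> 'a) = eproj (laplacian (blowup adj)) lam (evec y)" for y
  have "p (l, u) \<noteq> 0"
    by (simp add: p_def lam_def eproj_blowup_eq_0_iff[OF card])
  then have "p (l, u) = p (m, v) \<or> p (l, u) = - p (m, v)"
    using sc by (simp add: strongly_cospectral_def eig_support_eq p_def)
  moreover have "p (l, u) $ (l, u) - p (l, u) $ (k, u) = 1" if "k \<noteq> l" for k
    using that eproj_blowup_fibre_diff[of adj lam l u l u k] by (simp add: p_def lam_def evec_nth)
  ultimately have diff: "p (m, v) $ (l, u) - p (m, v) $ (k, u) \<noteq> 0" if "k \<noteq> l" for k
    using that by force
  have fibre_diff: "p (m, v) $ (l, u) - p (m, v) $ (k, u)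
      = (if lam = real CARD('n) * real (degree adj v) \<and> u = v then evec m $ l - evec m $ k else 0)" for k
    unfolding p_def by (rule eproj_blowup_fibre_diff)
  obtain k0 where "k0 \<noteq> l" using exists_other_if_card_ge_2[OF card] .
  then show "v = u"
    using diff[of k0] fibre_diff[of k0] by (auto split: if_splits)
  show "UNIV = {l, m}" if "l \<noteq> m"
  proof -
    have "k = m" if "k \<noteq> l" for k
      using diff[OF that] fibre_diff[of k] \<open>l \<noteq> m\<close> by (auto simp: evec_nth split: if_splits)
    then show ?thesis by blast
  qed
qed

lemma blowup_not_strongly_cospectral:
  fixes x y :: "'n::finite \<times> 'a::finite"
  assumes "CARD('n) \<ge> 3" and "x \<noteq> y"
  shows "\<not> strongly_cospectral (laplacian (blowup adj)) x y"
proof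
  assume sc: "strongly_cospectral (laplacian (blowup adj)) x y"
  obtain l u m v where x: "x = (l, u)" and y: "y = (m, v)" by fastforce
  have card: "CARD('n) \<ge> 2" using assms(1) by simp
  have sc': "strongly_cospectral (laplacian (blowup adj)) (l, u) (m, v)" using sc x y by simp
  have "v = u" using strongly_cospectral_blowup_imp(1)[OF card sc'] .
  with assms(2) x y have "l \<noteq> m" by simp
  then have "UNIV = {l, m}" by (rule strongly_cospectral_blowup_imp(2)[OF card sc'])
  then have "CARD('n) \<le> 2" by (metis card_2_iff eq_refl \<open>l \<noteq> m\<close>)
  with assms(1) show False by simp
qed

lemma strongly_cospectral_blowup2_partner:
  assumes "strongly_cospectral (laplacian (blowup adj)) (0 :: 2, u) z" and "z \<noteq> (0, u)"
  shows "z = (1, u)"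
proof -
  obtain m v where z: "z = (m, v)" by fastforce
  have "v = u"
    using assms(1) unfolding z by (rule strongly_cospectral_blowup_imp(1)[rotated]) simp
  moreover have "m = 1" using assms(2) z \<open>v = u\<close> exhaust_2[of m] by auto
  ultimately show ?thesis using z by simp
qed

lemma eproj_blowup2_eq_neg_iff:
  "eproj (laplacian (blowup adj)) lam (evec (0 :: 2, u))
      = - eproj (laplacian (blowup adj)) lam (evec (1 :: 2, u))
    \<longleftrightarrow> eproj (laplacian adj) (lam / 2) (evec u) = 0"
proof -
  have "eproj (laplacian (blowup adj)) lam (evec (0 :: 2, u))
      + eproj (laplacian (blowup adj)) lam (evec (1 :: 2, u))
      = fibre_const (eproj (laplacian adj) (lam / 2) (evec u))"
    by (simp add: eproj_blowup fibre_const_evec_2 algebra_simps)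
  then show ?thesis
    by (simp add: eq_neg_iff_add_eq_0 fibre_const_eq_0_iff)
qed

lemma strongly_cospectral_blowup2_iff:
  "strongly_cospectral (laplacian (blowup adj :: 2 \<times> 'a::finite \<Rightarrow> _)) (0, u) (1, u)
    \<longleftrightarrow> real (degree adj u) \<notin> eig_support (laplacian adj) u"
proof -
  have "strongly_cospectral (laplacian (blowup adj :: 2 \<times> 'a \<Rightarrow> _)) (0, u) (1, u)
      \<longleftrightarrow> (\<forall>lam. lam = 2 * real (degree adj u) \<longrightarrow> eproj (laplacian adj) (lam / 2) (evec u) = 0)"
    by (auto simp: strongly_cospectral_def eig_support_eq eproj_blowup_eq_0_iff
        eproj_blowup_eq_iff eproj_blowup2_eq_neg_iff)
  then show ?thesis by (simp add: eig_support_eq)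
qed

lemma image_times_2_eq: "(\<lambda>s. 2 * s) ` A = {lam :: real. lam / 2 \<in> A}"
proof (intro set_eqI iffI)
  fix lam :: real
  assume "lam \<in> {lam. lam / 2 \<in> A}"
  moreover have "lam = 2 * (lam / 2)" by simp
  ultimately show "lam \<in> (\<lambda>s. 2 * s) ` A" by (auto intro: image_eqI[rotated])
qed auto

lemma sigma_plus_blowup2:
  assumes "real (degree adj u) \<notin> eig_support (laplacian adj) u"
  shows "sigma_plus (laplacian (blowup adj :: 2 \<times> 'a::finite \<Rightarrow> _)) (0, u) (1, u)
    = (\<lambda>s. 2 * s) ` eig_support (laplacian adj) u"
proof -
  have "sigma_plus (laplacian (blowup adj :: 2 \<times> 'a \<Rightarrow> _)) (0, u) (1, u)
      = {lam. eproj (laplacian adj) (lam / 2) (evec u) \<noteq> 0}"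
    using assms by (auto simp: sigma_plus_eq eig_support_eq eproj_blowup_eq_0_iff eproj_blowup_eq_iff)
  then show ?thesis
    by (simp add: image_times_2_eq eig_support_eq)
qed

lemma sigma_minus_blowup2:
  assumes "real (degree adj u) \<notin> eig_support (laplacian adj) u"
  shows "sigma_minus (laplacian (blowup adj :: 2 \<times> 'a::finite \<Rightarrow> _)) (0, u) (1, u)
    = {2 * real (degree adj u)}"
  using assms by (auto simp: sigma_minus_eq eig_support_eq eproj_blowup_eq_0_iff eproj_blowup2_eq_neg_iff)

theorem theorem2:
  fixes adj :: "'a::finite \<Rightarrow> 'a \<Rightarrow> bool"
  assumes "simple_graph adj"
  shows "(CARD('n::finite) \<ge> 3 \<longrightarrow>
            (\<forall>x y :: 'n \<times> 'a. x \<noteq> y \<longrightarrow>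
               \<not> strongly_cospectral (laplacian (blowup adj)) x y))
       \<and> (\<forall>u. (strongly_cospectral (laplacian (blowup adj :: 2 \<times> 'a \<Rightarrow> _)) (0, u) (1, u)
                \<longleftrightarrow> real (degree adj u) \<notin> eig_support (laplacian adj) u)
           \<and> (strongly_cospectral (laplacian (blowup adj :: 2 \<times> 'a \<Rightarrow> _)) (0, u) (1, u) \<longrightarrow>
                sigma_plus (laplacian (blowup adj :: 2 \<times> 'a \<Rightarrow> _)) (0, u) (1, u)
                  = (\<lambda>s. 2 * s) ` eig_support (laplacian adj) u
              \<and> sigma_minus (laplacian (blowup adj :: 2 \<times> 'a \<Rightarrow> _)) (0, u) (1, u)
                  = {2 * real (degree adj u)})
           \<and> (\<forall>z. strongly_cospectral (laplacian (blowup adj :: 2 \<times> 'a \<Rightarrow> _)) (0, u) z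
                  \<longrightarrow> z \<noteq> (0, u) \<longrightarrow> z = (1, u)))"
proof (intro conjI allI impI)
  show "\<not> strongly_cospectral (laplacian (blowup adj)) x y"
    if "CARD('n) \<ge> 3" and "x \<noteq> y" for x y :: "'n \<times> 'a"
    using that by (rule blowup_not_strongly_cospectral)
qed (simp_all add: strongly_cospectral_blowup2_iff sigma_plus_blowup2 sigma_minus_blowup2
    strongly_cospectral_blowup2_partner)

end
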